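(* Let $X$ satisfy (P1) and (P2), let $\alpha$ be a saddle connection on $X$ which is neither a side nor a diagonal, and let $\alpha_{a+1},\dots,\alpha_{a+r}$ be a maximal run of consecutive adjacent segments in its polygonal decomposition which is not contained in a short cylinder. Then for any three consecutive segments $\alpha_i,\alpha_{i+1},\alpha_{i+2}$ of the run, no two of them lie in the same polygon.
   Context: $X$ is a translation surface obtained from finitely many Euclidean polygons by gluing pairs of parallel sides of equal length by translations, with (P1): each polygon convex with all angles obtuse or right; (P2): no two sides of the same polygon are identified. Saddle connection: straight segment between singularities (images of vertices) with none in its interior; a diagonal is a segment inside a polygon joining two non-adjacent vertices. Polygonal decomposition: cut $\alpha$ each time it passes from one polygon to another, giving consecutive oriented segments $\alpha_1,\dots,\alpha_k$, each in one polygon. A segment in polygon $P$ is adjacent if it goes from the relative interior of a side $e$ of $P$ to the relative interior of a side adjacent to $e$; otherwise non-adjacent. The type of a segment going from the interior of side $e$ to the interior of side $e'$ of the same polygon is $e\to e'$. A maximal run of consecutive adjacent segments is contained in a short cylinder if it has at least two segments and, whenever $\alpha_i$ and $\alpha_{i+2}$ both belong to the run, $\alpha_{i+2}$ has the same type as $\alpha_i$. *)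

theory Defs
  imports "HOL-Analysis.Analysis"
begin

text \<open>
The polygon data of X is a list P of polygons;
polygon p (for p < length P) is the list of its vertices, in counterclockwise order.
Side (p,i) (i < number of vertices of p) is the segment from vertex i to vertex i+1 (mod n).
The gluing is a map sg on sides (pairs (polygon index, side index)).
\<close>

definition nverts :: "complex list list \<Rightarrow> nat \<Rightarrow> nat" where
  "nverts P p = length (P ! p)"

definition vtx :: "complex list list \<Rightarrow> nat \<Rightarrow> nat \<Rightarrow> complex" where
  "vtx P p i = (P ! p) ! (i mod nverts P p)"

definition edge_vec :: "complex list list \<Rightarrow> nat \<Rightarrow> nat \<Rightarrow> complex" where
  "edge_vec P p i = vtx P p (Suc i) - vtx P p i"

definition cross :: "complex \<Rightarrow> complex \<Rightarrow> real" where
  "cross a b = Im (cnj a * b)"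

definition dotc :: "complex \<Rightarrow> complex \<Rightarrow> real" where
  "dotc a b = Re (cnj a * b)"

definition is_side :: "complex list list \<Rightarrow> nat \<times> nat \<Rightarrow> bool" where
  "is_side P s \<longleftrightarrow> fst s < length P \<and> snd s < nverts P (fst s)"

definition poly_region :: "complex list list \<Rightarrow> nat \<Rightarrow> complex set" where
  "poly_region P p = convex hull (set (P ! p))"

definition side_interior :: "complex list list \<Rightarrow> nat \<Rightarrow> nat \<Rightarrow> complex set" where
  "side_interior P p i = open_segment (vtx P p i) (vtx P p (Suc i))"

definition convex_ccw_polygon :: "complex list list \<Rightarrow> nat \<Rightarrow> bool" where
  "convex_ccw_polygon P p \<longleftrightarrow> nverts P p \<ge> 3 \<and>
     (\<forall>i < nverts P p. \<forall>j < nverts P p. j \<noteq> i \<and> j \<noteq> Suc i mod nverts P p \<longrightarrow>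
        cross (edge_vec P p i) (vtx P p j - vtx P p i) > 0)"

definition angles_obtuse_or_right :: "complex list list \<Rightarrow> nat \<Rightarrow> bool" where
  "angles_obtuse_or_right P p \<longleftrightarrow>
     (\<forall>i < nverts P p. dotc (vtx P p (i + nverts P p - 1) - vtx P p i)
                           (vtx P p (Suc i) - vtx P p i) \<le> 0)"

text \<open>A translation surface given by finitely many polygons and a pairing of sides:
the pairing is a fixed-point-free involution on the sides, and paired sides are parallel,
of equal length, and glued by a translation (with counterclockwise orientation the
edge vectors of paired sides are opposite).\<close>
definition translation_surface :: "complex list list \<Rightarrow> (nat \<times> nat \<Rightarrow> nat \<times> nat) \<Rightarrow> bool" where
  "translation_surface P sg \<longleftrightarrow> P \<noteq> [] \<and>
     (\<forall>p < length P. convex_ccw_polygon P p) \<and>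
     (\<forall>s. is_side P s \<longrightarrow> is_side P (sg s) \<and> sg (sg s) = s \<and> sg s \<noteq> s \<and>
         edge_vec P (fst (sg s)) (snd (sg s)) = - edge_vec P (fst s) (snd s))"

definition glue_map :: "complex list list \<Rightarrow> (nat \<times> nat \<Rightarrow> nat \<times> nat) \<Rightarrow> nat \<times> nat \<Rightarrow> complex \<Rightarrow> complex" where
  "glue_map P sg s x = x + (vtx P (fst (sg s)) (snd (sg s)) - vtx P (fst s) (Suc (snd s)))"

definition P1 :: "complex list list \<Rightarrow> bool" where
  "P1 P \<longleftrightarrow> (\<forall>p < length P. convex_ccw_polygon P p \<and> angles_obtuse_or_right P p)"

definition P2 :: "complex list list \<Rightarrow> (nat \<times> nat \<Rightarrow> nat \<times> nat) \<Rightarrow> bool" where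
  "P2 P sg \<longleftrightarrow> (\<forall>s. is_side P s \<longrightarrow> fst (sg s) \<noteq> fst s)"

text \<open>A segment of a polygonal decomposition: (polygon index, start point, end point),
coordinates in the plane of that polygon.\<close>
type_synonym seg = "nat \<times> complex \<times> complex"

definition seg_poly :: "seg \<Rightarrow> nat" where "seg_poly a = fst a"
definition seg_start :: "seg \<Rightarrow> complex" where "seg_start a = fst (snd a)"
definition seg_end :: "seg \<Rightarrow> complex" where "seg_end a = snd (snd a)"

definition is_vertex :: "complex list list \<Rightarrow> nat \<Rightarrow> complex \<Rightarrow> bool" where
  "is_vertex P p x \<longleftrightarrow> x \<in> set (P ! p)"

text \<open>The list segs is the polygonal decomposition of an (oriented) saddle connection:
a straight trajectory of constant direction d, starting and ending at vertices
(singularities), each piece a straight segment in one polygon containing no vertex in its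
interior, and consecutive pieces related by the side gluing at a point of the relative
interior of a side (so no singularity lies in the interior of the trajectory).\<close>
definition saddle_connection ::
  "complex list list \<Rightarrow> (nat \<times> nat \<Rightarrow> nat \<times> nat) \<Rightarrow> seg list \<Rightarrow> bool" where
  "saddle_connection P sg segs \<longleftrightarrow> segs \<noteq> [] \<and>
     (\<exists>d. d \<noteq> 0 \<and> (\<forall>j < length segs.
        seg_poly (segs ! j) < length P \<and>
        (\<exists>l::real. l > 0 \<and> seg_end (segs ! j) - seg_start (segs ! j) = of_real l * d) \<and>
        seg_start (segs ! j) \<in> poly_region P (seg_poly (segs ! j)) \<and>
        seg_end (segs ! j) \<in> poly_region P (seg_poly (segs ! j)) \<and>
        (\<forall>v \<in> set (P ! seg_poly (segs ! j)).
            v \<notin> open_segment (seg_start (segs ! j)) (seg_end (segs ! j))))) \<and>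
     is_vertex P (seg_poly (hd segs)) (seg_start (hd segs)) \<and>
     is_vertex P (seg_poly (last segs)) (seg_end (last segs)) \<and>
     (\<forall>j. Suc j < length segs \<longrightarrow>
        (\<exists>i < nverts P (seg_poly (segs ! j)).
           seg_end (segs ! j) \<in> side_interior P (seg_poly (segs ! j)) i \<and>
           fst (sg (seg_poly (segs ! j), i)) = seg_poly (segs ! Suc j) \<and>
           seg_start (segs ! Suc j) = glue_map P sg (seg_poly (segs ! j), i) (seg_end (segs ! j))))"

definition sc_is_side :: "complex list list \<Rightarrow> seg list \<Rightarrow> bool" where
  "sc_is_side P segs \<longleftrightarrow> length segs = 1 \<and>
     (\<exists>i < nverts P (seg_poly (hd segs)).
        {seg_start (hd segs), seg_end (hd segs)} =
        {vtx P (seg_poly (hd segs)) i, vtx P (seg_poly (hd segs)) (Suc i)})"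

definition sides_adjacent :: "nat \<Rightarrow> nat \<Rightarrow> nat \<Rightarrow> bool" where
  "sides_adjacent n e e' \<longleftrightarrow> e' = Suc e mod n \<or> e = Suc e' mod n"

definition sc_is_diagonal :: "complex list list \<Rightarrow> seg list \<Rightarrow> bool" where
  "sc_is_diagonal P segs \<longleftrightarrow> length segs = 1 \<and>
     (\<exists>i < nverts P (seg_poly (hd segs)). \<exists>j < nverts P (seg_poly (hd segs)).
        seg_start (hd segs) = vtx P (seg_poly (hd segs)) i \<and>
        seg_end (hd segs) = vtx P (seg_poly (hd segs)) j \<and>
        i \<noteq> j \<and> \<not> sides_adjacent (nverts P (seg_poly (hd segs))) i j)"

text \<open>Segment a has type e \<rightarrow> e', where e = (p,i), e' = (p,i') are sides of its polygon p:
it goes from the relative interior of e to the relative interior of e'.\<close>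
definition seg_has_type :: "complex list list \<Rightarrow> seg \<Rightarrow> nat \<times> nat \<Rightarrow> nat \<times> nat \<Rightarrow> bool" where
  "seg_has_type P a e e' \<longleftrightarrow>
     fst e = seg_poly a \<and> fst e' = seg_poly a \<and>
     snd e < nverts P (seg_poly a) \<and> snd e' < nverts P (seg_poly a) \<and>
     seg_start a \<in> side_interior P (seg_poly a) (snd e) \<and>
     seg_end a \<in> side_interior P (seg_poly a) (snd e')"

definition adjacent_seg :: "complex list list \<Rightarrow> seg \<Rightarrow> bool" where
  "adjacent_seg P a \<longleftrightarrow>
     (\<exists>e e'. seg_has_type P a e e' \<and> sides_adjacent (nverts P (seg_poly a)) (snd e) (snd e'))"

definition same_type :: "complex list list \<Rightarrow> seg \<Rightarrow> seg \<Rightarrow> bool" where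
  "same_type P a b \<longleftrightarrow> (\<exists>e e'. seg_has_type P a e e' \<and> seg_has_type P b e e')"

text \<open>0-based indexing: segs ! a, ..., segs ! (a + r - 1) (i.e. alpha_(a+1), ..., alpha_(a+r))
is a maximal run of consecutive adjacent segments.\<close>
definition maximal_adjacent_run :: "complex list list \<Rightarrow> seg list \<Rightarrow> nat \<Rightarrow> nat \<Rightarrow> bool" where
  "maximal_adjacent_run P segs a r \<longleftrightarrow> r \<ge> 1 \<and> a + r \<le> length segs \<and>
     (\<forall>j. a \<le> j \<and> j < a + r \<longrightarrow> adjacent_seg P (segs ! j)) \<and>
     (a = 0 \<or> \<not> adjacent_seg P (segs ! (a - 1))) \<and>
     (a + r = length segs \<or> \<not> adjacent_seg P (segs ! (a + r)))"

definition in_short_cylinder :: "complex list list \<Rightarrow> seg list \<Rightarrow> nat \<Rightarrow> nat \<Rightarrow> bool" where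
  "in_short_cylinder P segs a r \<longleftrightarrow> r \<ge> 2 \<and>
     (\<forall>i. a \<le> i \<and> i + 2 < a + r \<longrightarrow> same_type P (segs ! i) (segs ! (i + 2)))"

end

theory Submission
  imports Defs
begin

text \<open>
  Fix the common direction \<open>d\<close> of the segments. In a convex polygon a segment of direction \<open>d\<close>
  going between adjacent sides cuts off the unique vertex that minimises \<open>cross d\<close>, either
  turning counterclockwise (edge vectors of both sides have positive dot product with \<open>d\<close>) or
  clockwise (both negative). The type of an adjacent segment is therefore determined by its
  polygon and this sense of turning. Gluing reverses edge vectors, so the sense alternates from
  segment to segment; hence if \<open>\<alpha>\<^sub>i\<close> and \<open>\<alpha>\<^sub>i\<^sub>+\<^sub>2\<close> lie in the same polygon they have the same
  type. Then they leave through the same side and enter through the same side, so \<open>\<alpha>\<^sub>i\<^sub>+\<^sub>1\<close>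
  and \<open>\<alpha>\<^sub>i\<^sub>+\<^sub>3\<close>, and also \<open>\<alpha>\<^sub>i\<^sub>-\<^sub>1\<close> and \<open>\<alpha>\<^sub>i\<^sub>+\<^sub>1\<close>, lie in the same polygon. Propagating along the
  run, all segments two apart have the same type, i.e. the run lies in a short cylinder.
  Consecutive segments lie in different polygons by (P2).
\<close>

lemma cross_altdef: "cross a b = Re a * Im b - Im a * Re b"
  by (simp add: cross_def)

lemma dotc_altdef: "dotc a b = Re a * Re b + Im a * Im b"
  by (simp add: dotc_def)

lemma cross_self [simp]: "cross a a = 0"
  and cross_zero_right [simp]: "cross a 0 = 0"
  by (simp_all add: cross_altdef)

lemma cross_minus_right [simp]: "cross a (- b) = - cross a b"
  and dotc_minus_left [simp]: "dotc (- a) b = - dotc a b"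
  and dotc_minus_right [simp]: "dotc a (- b) = - dotc a b"
  by (simp_all add: cross_altdef dotc_altdef)

lemma cross_diff_right: "cross a (b - c) = cross a b - cross a c"
  by (simp add: cross_altdef algebra_simps)

lemma cross_of_real_mult_right: "cross a (of_real l * b) = l * cross a b"
  by (simp add: cross_altdef algebra_simps)

lemma cross_convex_comb:
  "cross a ((1 - u) *\<^sub>R b + u *\<^sub>R c - v) = (1 - u) * cross a (b - v) + u * cross a (c - v)"
  by (simp add: cross_altdef algebra_simps)

lemma dotc_self_pos: "a \<noteq> 0 \<Longrightarrow> dotc a a > 0"
  by (simp add: dotc_altdef complex_eq_iff sum_power2_gt_zero_iff flip: power2_eq_square)

lemma dotc_pos_if_between:
  assumes AB: "cross A B > 0" "dotc A B \<ge> 0" and d: "cross A d > 0" "cross B d < 0"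
  shows "dotc A d > 0 \<and> dotc B d > 0"
proof
  have "A \<noteq> 0" "B \<noteq> 0" using AB(1) by (auto simp: cross_altdef)
  then have AA: "dotc A A > 0" and BB: "dotc B B > 0" by (simp_all add: dotc_self_pos)
  have "cross B d * dotc A A = dotc A d * cross B A + cross A d * dotc B A"
    by (simp add: cross_altdef dotc_altdef algebra_simps)
  moreover have "cross B d * dotc A A < 0" using AA d(2) by (simp add: mult_neg_pos)
  moreover have "cross A d * dotc B A \<ge> 0" using AB(2) d(1) by (simp add: dotc_altdef mult.commute)
  moreover have "cross B A = - cross A B" by (simp add: cross_altdef)
  ultimately have "dotc A d * cross A B > 0" by simp
  then show "dotc A d > 0" using AB(1) by (simp add: zero_less_mult_iff)
  have "cross A d * dotc B B = dotc B d * cross A B + cross B d * dotc A B"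
    by (simp add: cross_altdef dotc_altdef algebra_simps)
  moreover have "cross A d * dotc B B > 0" using BB d(1) by simp
  moreover have "cross B d * dotc A B \<le> 0" using AB(2) d(2) by (simp add: mult_le_0_iff)
  ultimately have "dotc B d * cross A B > 0" by linarith
  then show "dotc B d > 0" using AB(1) by (simp add: zero_less_mult_iff)
qed

lemma vtx_mod [simp]: "vtx P p (k mod nverts P p) = vtx P p k"
  by (simp add: vtx_def)

lemma vtx_Suc_mod [simp]: "vtx P p (Suc (k mod nverts P p)) = vtx P p (Suc k)"
  by (simp add: vtx_def mod_Suc_eq)

lemma edge_vec_mod [simp]: "edge_vec P p (k mod nverts P p) = edge_vec P p k"
  by (simp add: edge_vec_def)

lemma Suc_mod_distinct:
  assumes "i < n" "3 \<le> n"
  shows "Suc (Suc i) mod n \<noteq> i" "Suc (Suc i) mod n \<noteq> Suc i mod n" "Suc i mod n \<noteq> i"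
proof -
  consider "Suc (Suc i) < n" | "Suc (Suc i) = n" | "Suc i = n" using assms by linarith
  then show "Suc (Suc i) mod n \<noteq> i" "Suc (Suc i) mod n \<noteq> Suc i mod n" "Suc i mod n \<noteq> i"
    by cases (use assms in \<open>auto simp: mod_Suc\<close>)
qed

lemma convex_ccw_polygon_nverts: "convex_ccw_polygon P p \<Longrightarrow> 3 \<le> nverts P p"
  by (simp add: convex_ccw_polygon_def)

lemma cross_edge_vtx_pos:
  assumes cv: "convex_ccw_polygon P p"
    and j: "j mod nverts P p \<noteq> i mod nverts P p" "j mod nverts P p \<noteq> Suc i mod nverts P p"
  shows "cross (edge_vec P p i) (vtx P p j - vtx P p i) > 0"
proof -
  let ?n = "nverts P p"
  have n: "?n > 0" using convex_ccw_polygon_nverts[OF cv] by simp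
  have left: "\<And>i j. i < ?n \<Longrightarrow> j < ?n \<Longrightarrow> j \<noteq> i \<Longrightarrow> j \<noteq> Suc i mod ?n \<Longrightarrow>
      cross (edge_vec P p i) (vtx P p j - vtx P p i) > 0"
    using cv unfolding convex_ccw_polygon_def by blast
  have "cross (edge_vec P p (i mod ?n)) (vtx P p (j mod ?n) - vtx P p (i mod ?n)) > 0"
    by (rule left) (use j n in \<open>simp_all add: mod_Suc_eq\<close>)
  then show ?thesis by simp
qed

lemma cross_edge_vtx_nonneg:
  assumes "convex_ccw_polygon P p"
  shows "cross (edge_vec P p i) (vtx P p j - vtx P p i) \<ge> 0"
proof -
  let ?n = "nverts P p"
  consider "j mod ?n = i mod ?n" | "j mod ?n = Suc i mod ?n"
    | "j mod ?n \<noteq> i mod ?n" "j mod ?n \<noteq> Suc i mod ?n" by blast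
  then show ?thesis
  proof cases
    case 1
    then have "vtx P p j = vtx P p i" by (simp add: vtx_def)
    then show ?thesis by simp
  next
    case 2
    then have "vtx P p j = vtx P p (Suc i)" by (simp add: vtx_def)
    then show ?thesis by (simp add: edge_vec_def)
  next
    case 3
    then show ?thesis using cross_edge_vtx_pos[OF assms] by (simp add: less_imp_le)
  qed
qed

lemma cross_edge_side_interior_eq_0:
  assumes "x \<in> side_interior P p i"
  shows "cross (edge_vec P p i) (x - vtx P p i) = 0"
proof -
  from assms obtain u where "x = (1 - u) *\<^sub>R vtx P p i + u *\<^sub>R vtx P p (Suc i)"
    unfolding side_interior_def in_segment by auto
  then show ?thesis by (simp add: cross_convex_comb edge_vec_def)
qed

lemma cross_edge_side_interior_pos:
  assumes cv: "convex_ccw_polygon P p"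
    and ij: "i < nverts P p" "j < nverts P p" "i \<noteq> j" and x: "x \<in> side_interior P p j"
  shows "cross (edge_vec P p i) (x - vtx P p i) > 0"
proof -
  let ?n = "nverts P p"
  from x obtain u where u: "0 < u" "u < 1" "x = (1 - u) *\<^sub>R vtx P p j + u *\<^sub>R vtx P p (Suc j)"
    unfolding side_interior_def in_segment by auto
  define A where "A = cross (edge_vec P p i) (vtx P p j - vtx P p i)"
  define B where "B = cross (edge_vec P p i) (vtx P p (Suc j) - vtx P p i)"
  have comb: "cross (edge_vec P p i) (x - vtx P p i) = (1 - u) * A + u * B"
    by (simp add: u(3) cross_convex_comb A_def B_def)
  have "A \<ge> 0" "B \<ge> 0" using cross_edge_vtx_nonneg[OF cv] by (simp_all add: A_def B_def)
  moreover have "A > 0 \<or> B > 0"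
  proof (cases "j = Suc i mod ?n")
    case True
    then have "Suc j mod ?n = Suc (Suc i) mod ?n" by (simp add: mod_Suc_eq)
    then have "B > 0"
      using cross_edge_vtx_pos[OF cv, of "Suc j" i] Suc_mod_distinct[OF ij(1) convex_ccw_polygon_nverts[OF cv]]
      by (simp add: B_def ij(1))
    then show ?thesis ..
  next
    case False
    then have "A > 0" using cross_edge_vtx_pos[OF cv, of j i] ij by (simp add: A_def)
    then show ?thesis ..
  qed
  ultimately show ?thesis
    using comb u by (smt (verit) mult_nonneg_nonneg mult_pos_pos)
qed

lemma side_interior_unique:
  assumes "convex_ccw_polygon P p" "i < nverts P p" "j < nverts P p"
    and "x \<in> side_interior P p i" "x \<in> side_interior P p j"
  shows "i = j"
  using cross_edge_side_interior_pos[OF assms(1-3) _ assms(5)] cross_edge_side_interior_eq_0[OF assms(4)]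
  by force

lemma cross_consecutive_edges_pos:
  assumes cv: "convex_ccw_polygon P p" and k: "k < nverts P p"
  shows "cross (edge_vec P p k) (edge_vec P p (Suc k)) > 0"
proof -
  note distinct = Suc_mod_distinct[OF k convex_ccw_polygon_nverts[OF cv]]
  have "cross (edge_vec P p k) (vtx P p (Suc (Suc k)) - vtx P p k) > 0"
    using cross_edge_vtx_pos[OF cv] distinct k by simp
  moreover have "edge_vec P p (Suc k) = (vtx P p (Suc (Suc k)) - vtx P p k) - edge_vec P p k"
    by (simp add: edge_vec_def)
  ultimately show ?thesis by (simp add: cross_diff_right)
qed

lemma dotc_consecutive_edges_nonneg:
  assumes ob: "angles_obtuse_or_right P p" and n: "nverts P p > 0"
  shows "dotc (edge_vec P p k) (edge_vec P p (Suc k)) \<ge> 0"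
proof -
  let ?n = "nverts P p"
  define m where "m = Suc k mod ?n"
  have "m < ?n" using n by (simp add: m_def)
  then have "dotc (vtx P p (m + ?n - 1) - vtx P p m) (vtx P p (Suc m) - vtx P p m) \<le> 0"
    using ob unfolding angles_obtuse_or_right_def by blast
  moreover have "vtx P p m = vtx P p (Suc k)" "vtx P p (Suc m) = vtx P p (Suc (Suc k))"
    by (simp_all add: m_def)
  moreover have "(m + ?n - 1) mod ?n = k mod ?n"
    using n by (cases "Suc (k mod ?n) = ?n") (auto simp: m_def mod_Suc)
  then have "vtx P p (m + ?n - 1) = vtx P p k" by (simp add: vtx_def)
  ultimately have "dotc (- edge_vec P p k) (edge_vec P p (Suc k)) \<le> 0"
    by (simp add: edge_vec_def)
  then show ?thesis by simp
qed

text \<open>Corner \<open>k\<close> (the vertex \<open>k + 1\<close>) of polygon \<open>p\<close> is where the boundary turns from moving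
  to the left of \<open>d\<close> to moving to the right of \<open>d\<close>.\<close>
definition turning_corner :: "complex list list \<Rightarrow> nat \<Rightarrow> complex \<Rightarrow> nat \<Rightarrow> bool" where
  "turning_corner P p d k \<longleftrightarrow>
     cross (edge_vec P p k) d > 0 \<and> cross (edge_vec P p (Suc k)) d < 0"

lemma turning_corner_vtx_min:
  assumes cv: "convex_ccw_polygon P p" and k: "k < nverts P p"
    and tc: "turning_corner P p d k" and j: "j mod nverts P p \<noteq> Suc k mod nverts P p"
  shows "cross d (vtx P p j) > cross d (vtx P p (Suc k))"
proof -
  define A where "A = edge_vec P p k"
  define B where "B = edge_vec P p (Suc k)"
  define x where "x = vtx P p j - vtx P p (Suc k)"
  have Ax: "cross A x = cross (edge_vec P p k) (vtx P p j - vtx P p k)"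
    by (simp add: A_def x_def edge_vec_def cross_altdef algebra_simps)
  have Bx: "cross B x = cross (edge_vec P p (Suc k)) (vtx P p j - vtx P p (Suc k))"
    by (simp add: B_def x_def)
  have "cross A x \<ge> 0" "cross B x \<ge> 0"
    unfolding Ax Bx by (simp_all add: cross_edge_vtx_nonneg[OF cv])
  moreover have "cross A x > 0 \<or> cross B x > 0"
  proof (cases "j mod nverts P p = k")
    case True
    then have "cross B x > 0"
      using cross_edge_vtx_pos[OF cv, of j "Suc k"] Suc_mod_distinct[OF k convex_ccw_polygon_nverts[OF cv]]
      unfolding Bx by (simp add: mod_Suc_eq)
    then show ?thesis ..
  next
    case False
    then have "cross A x > 0" using cross_edge_vtx_pos[OF cv, of j k] k j unfolding Ax by simp
    then show ?thesis ..
  qed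
  moreover have "cross A d > 0" "cross d B > 0"
    using tc by (simp_all add: turning_corner_def A_def B_def cross_altdef mult.commute)
  ultimately have "cross B x * cross A d + cross A x * cross d B > 0"
    by (smt (verit) mult_nonneg_nonneg mult_pos_pos)
  moreover have "cross d x * cross A B = cross B x * cross A d + cross A x * cross d B"
    by (simp add: cross_altdef algebra_simps)
  ultimately have "cross d x * cross A B > 0" by simp
  moreover have "cross A B > 0" using cross_consecutive_edges_pos[OF cv k] by (simp add: A_def B_def)
  ultimately have "cross d x > 0" by (simp add: zero_less_mult_iff)
  then show ?thesis by (simp add: x_def cross_diff_right)
qed

lemma turning_corner_unique:
  assumes cv: "convex_ccw_polygon P p" and "k < nverts P p" "g < nverts P p"
    and "turning_corner P p d k" "turning_corner P p d g"
  shows "k = g"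
proof (rule ccontr)
  assume "k \<noteq> g"
  then have "Suc k mod nverts P p \<noteq> Suc g mod nverts P p"
    using assms(2,3) by (auto simp: mod_Suc split: if_splits)
  then show False
    using turning_corner_vtx_min[OF cv assms(2,4), of "Suc g"]
      turning_corner_vtx_min[OF cv assms(3,5), of "Suc k"] by simp
qed

definition seg_direction :: "seg \<Rightarrow> complex \<Rightarrow> bool" where
  "seg_direction a d \<longleftrightarrow> (\<exists>l::real. l > 0 \<and> seg_end a - seg_start a = of_real l * d)"

lemma seg_type_cross_signs:
  assumes cv: "convex_ccw_polygon P p" and ty: "seg_has_type P a (p, s) (p, t)" and "s \<noteq> t"
    and dir: "seg_direction a d"
  shows "cross (edge_vec P p s) d > 0" "cross (edge_vec P p t) d < 0"
proof -
  obtain l :: real where l: "l > 0" "seg_end a - seg_start a = of_real l * d"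
    using dir by (auto simp: seg_direction_def)
  have st: "s < nverts P p" "t < nverts P p"
    and ends: "seg_start a \<in> side_interior P p s" "seg_end a \<in> side_interior P p t"
    using ty by (auto simp: seg_has_type_def)
  have "cross (edge_vec P p s) (seg_end a - seg_start a) > 0"
    using cross_edge_side_interior_pos[OF cv st \<open>s \<noteq> t\<close> ends(2)] cross_edge_side_interior_eq_0[OF ends(1)]
    by (simp add: cross_diff_right)
  then show "cross (edge_vec P p s) d > 0"
    using l by (simp add: cross_of_real_mult_right zero_less_mult_iff)
  have "cross (edge_vec P p t) (seg_end a - seg_start a) < 0"
    using cross_edge_side_interior_pos[OF cv st(2,1) _ ends(1)] \<open>s \<noteq> t\<close> cross_edge_side_interior_eq_0[OF ends(2)]
    by (simp add: cross_diff_right)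
  then show "cross (edge_vec P p t) d < 0"
    using l by (simp add: cross_of_real_mult_right mult_less_0_iff)
qed

lemma sides_adjacent_neq:
  assumes "sides_adjacent n s t" "s < n" "t < n" "3 \<le> n"
  shows "s \<noteq> t"
  using assms Suc_mod_distinct[of s n] by (auto simp: sides_adjacent_def)

lemma adjacent_type_dotc:
  assumes cv: "convex_ccw_polygon P p" and ob: "angles_obtuse_or_right P p"
    and ty: "seg_has_type P a (p, s) (p, t)" and adj: "sides_adjacent (nverts P p) s t"
    and dir: "seg_direction a d"
  shows "(t = Suc s mod nverts P p \<and> dotc (edge_vec P p s) d > 0 \<and> dotc (edge_vec P p t) d > 0) \<or>
         (s = Suc t mod nverts P p \<and> dotc (edge_vec P p s) d < 0 \<and> dotc (edge_vec P p t) d < 0)"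
proof -
  have st: "s < nverts P p" "t < nverts P p" using ty by (auto simp: seg_has_type_def)
  have n: "nverts P p > 0" using st by simp
  note signs = seg_type_cross_signs[OF cv ty sides_adjacent_neq[OF adj st convex_ccw_polygon_nverts[OF cv]] dir]
  show ?thesis
  proof (cases "t = Suc s mod nverts P p")
    case True
    then have "edge_vec P p t = edge_vec P p (Suc s)" by simp
    with signs dotc_pos_if_between[OF cross_consecutive_edges_pos[OF cv st(1)]
        dotc_consecutive_edges_nonneg[OF ob n]]
    show ?thesis using True by simp
  next
    case False
    then have s: "s = Suc t mod nverts P p" using adj by (simp add: sides_adjacent_def)
    then have "edge_vec P p s = edge_vec P p (Suc t)" by simp
    with signs dotc_pos_if_between[OF cross_consecutive_edges_pos[OF cv st(2)]
        dotc_consecutive_edges_nonneg[OF ob n], of "- d"]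
    show ?thesis using s by simp
  qed
qed

lemma adjacent_types_eq:
  assumes cv: "convex_ccw_polygon P p" and ob: "angles_obtuse_or_right P p"
    and ty1: "seg_has_type P a1 (p, s1) (p, t1)" "sides_adjacent (nverts P p) s1 t1" "seg_direction a1 d"
    and ty2: "seg_has_type P a2 (p, s2) (p, t2)" "sides_adjacent (nverts P p) s2 t2" "seg_direction a2 d"
    and sense: "dotc (edge_vec P p s1) d > 0 \<longleftrightarrow> dotc (edge_vec P p s2) d > 0"
  shows "s1 = s2 \<and> t1 = t2"
proof -
  have lt: "s1 < nverts P p" "t1 < nverts P p" "s2 < nverts P p" "t2 < nverts P p"
    using ty1(1) ty2(1) by (auto simp: seg_has_type_def)
  note n3 = convex_ccw_polygon_nverts[OF cv]
  note signs1 = seg_type_cross_signs[OF cv ty1(1) sides_adjacent_neq[OF ty1(2) lt(1,2) n3] ty1(3)]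
  note signs2 = seg_type_cross_signs[OF cv ty2(1) sides_adjacent_neq[OF ty2(2) lt(3,4) n3] ty2(3)]
  note sense1 = adjacent_type_dotc[OF cv ob ty1]
  note sense2 = adjacent_type_dotc[OF cv ob ty2]
  show ?thesis
  proof (cases "dotc (edge_vec P p s1) d > 0")
    case True
    then have t: "t1 = Suc s1 mod nverts P p" "t2 = Suc s2 mod nverts P p"
      using sense sense1 sense2 by auto
    have "turning_corner P p d s1" "turning_corner P p d s2"
      using signs1 signs2 t by (auto simp: turning_corner_def)
    then show ?thesis using turning_corner_unique[OF cv lt(1,3)] t by metis
  next
    case False
    then have s: "s1 = Suc t1 mod nverts P p" "s2 = Suc t2 mod nverts P p"
      using sense sense1 sense2 by auto
    have "turning_corner P p (- d) t1" "turning_corner P p (- d) t2"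
      using signs1 signs2 s by (auto simp: turning_corner_def)
    then show ?thesis using turning_corner_unique[OF cv lt(2,4)] s by metis
  qed
qed

lemma glue_map_side_interior:
  assumes ts: "translation_surface P sg" and side: "is_side P e"
    and x: "x \<in> side_interior P (fst e) (snd e)"
  shows "glue_map P sg e x \<in> side_interior P (fst (sg e)) (snd (sg e))"
proof -
  obtain p i q m where e: "e = (p, i)" and qm: "sg e = (q, m)" by fastforce
  have E: "edge_vec P q m = - edge_vec P p i"
    using ts side e qm unfolding translation_surface_def by force
  from x obtain u where u: "0 < u" "u < 1" "x = (1 - u) *\<^sub>R vtx P p i + u *\<^sub>R vtx P p (Suc i)"
    and ne: "vtx P p i \<noteq> vtx P p (Suc i)"
    unfolding side_interior_def in_segment e by auto
  have ne': "vtx P q m \<noteq> vtx P q (Suc m)" using E ne by (auto simp: edge_vec_def)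
  have shift: "vtx P q (Suc m) = vtx P q m - (vtx P p (Suc i) - vtx P p i)"
    using E by (simp add: edge_vec_def algebra_simps)
  have "glue_map P sg e x = (1 - (1 - u)) *\<^sub>R vtx P q m + (1 - u) *\<^sub>R vtx P q (Suc m)"
    unfolding glue_map_def e qm[unfolded e] u(3) shift by (simp add: scaleR_conv_of_real algebra_simps)
  then have "glue_map P sg e x \<in> open_segment (vtx P q m) (vtx P q (Suc m))"
    unfolding in_segment using ne' u by (intro conjI exI[of _ "1 - u"]) auto
  then show ?thesis by (simp add: qm side_interior_def)
qed

lemma saddle_connection_seg_poly:
  "saddle_connection P sg segs \<Longrightarrow> j < length segs \<Longrightarrow> seg_poly (segs ! j) < length P"
  unfolding saddle_connection_def by blast

lemma saddle_connection_direction: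
  assumes "saddle_connection P sg segs"
  obtains d where "\<And>j. j < length segs \<Longrightarrow> seg_direction (segs ! j) d"
  using assms unfolding saddle_connection_def seg_direction_def by blast

lemma saddle_connection_poly_Suc_neq:
  assumes p2: "P2 P sg" and sc: "saddle_connection P sg segs" and j: "Suc j < length segs"
  shows "seg_poly (segs ! j) \<noteq> seg_poly (segs ! Suc j)"
proof -
  from sc j obtain k where k: "k < nverts P (seg_poly (segs ! j))"
      "fst (sg (seg_poly (segs ! j), k)) = seg_poly (segs ! Suc j)"
    unfolding saddle_connection_def by blast
  have "is_side P (seg_poly (segs ! j), k)"
    using k saddle_connection_seg_poly[OF sc] j by (simp add: is_side_def)
  then show ?thesis using p2 k unfolding P2_def by fastforce
qed

lemma saddle_connection_exit:
  assumes ts: "translation_surface P sg" and p1: "P1 P" and sc: "saddle_connection P sg segs"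
    and j: "Suc j < length segs" and ty: "seg_has_type P (segs ! j) e e'"
  shows "is_side P e'" "fst (sg e') = seg_poly (segs ! Suc j)"
    "seg_start (segs ! Suc j) \<in> side_interior P (seg_poly (segs ! Suc j)) (snd (sg e'))"
proof -
  let ?p = "seg_poly (segs ! j)"
  have e': "fst e' = ?p" "snd e' < nverts P ?p" "seg_end (segs ! j) \<in> side_interior P ?p (snd e')"
    using ty by (auto simp: seg_has_type_def)
  have pl: "?p < length P" using saddle_connection_seg_poly[OF sc] j by simp
  then have cv: "convex_ccw_polygon P ?p" using p1 by (simp add: P1_def)
  from sc j obtain k where k: "k < nverts P ?p" "seg_end (segs ! j) \<in> side_interior P ?p k"
      "fst (sg (?p, k)) = seg_poly (segs ! Suc j)"
      "seg_start (segs ! Suc j) = glue_map P sg (?p, k) (seg_end (segs ! j))"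
    unfolding saddle_connection_def by blast
  have "k = snd e'" using side_interior_unique[OF cv k(1) e'(2) k(2) e'(3)] .
  then have ke: "(?p, k) = e'" using e'(1) by (simp add: prod_eq_iff)
  show "is_side P e'" using pl e' by (simp add: is_side_def)
  then show "fst (sg e') = seg_poly (segs ! Suc j)"
    "seg_start (segs ! Suc j) \<in> side_interior P (seg_poly (segs ! Suc j)) (snd (sg e'))"
    using k ke glue_map_side_interior[OF ts, of e' "seg_end (segs ! j)"] e' by auto
qed

lemma saddle_connection_glued_types:
  assumes ts: "translation_surface P sg" and p1: "P1 P" and sc: "saddle_connection P sg segs"
    and j: "Suc j < length segs"
    and ty: "seg_has_type P (segs ! j) e e'" and ty': "seg_has_type P (segs ! Suc j) f f'"
  shows "sg e' = f" "edge_vec P (fst f) (snd f) = - edge_vec P (fst e') (snd e')"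
proof -
  let ?q = "seg_poly (segs ! Suc j)"
  note exit = saddle_connection_exit[OF ts p1 sc j ty]
  have f: "fst f = ?q" "snd f < nverts P ?q" "seg_start (segs ! Suc j) \<in> side_interior P ?q (snd f)"
    using ty' by (auto simp: seg_has_type_def)
  have cv: "convex_ccw_polygon P ?q"
    using p1 saddle_connection_seg_poly[OF sc j] by (simp add: P1_def)
  have glued: "is_side P (sg e') \<and> edge_vec P (fst (sg e')) (snd (sg e')) = - edge_vec P (fst e') (snd e')"
    using ts exit(1) unfolding translation_surface_def by blast
  then have "snd (sg e') < nverts P ?q" using exit(2) by (simp add: is_side_def)
  then have "snd (sg e') = snd f" by (rule side_interior_unique[OF cv _ f(2) exit(3) f(3)])
  then show "sg e' = f" using exit(2) f(1) by (simp add: prod_eq_iff)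
  then show "edge_vec P (fst f) (snd f) = - edge_vec P (fst e') (snd e')" using glued by simp
qed

text \<open>The sense of turning alternates along the saddle connection, so it is the same for
  \<open>\<alpha>\<^sub>j\<close> and \<open>\<alpha>\<^sub>j\<^sub>+\<^sub>2\<close>.\<close>
lemma saddle_connection_adjacent_types_Suc_Suc:
  assumes ts: "translation_surface P sg" and p1: "P1 P" and sc: "saddle_connection P sg segs"
    and j: "Suc (Suc j) < length segs"
    and ty1: "seg_has_type P (segs ! j) (p, s1) (p, t1)" "sides_adjacent (nverts P p) s1 t1"
    and ty2: "seg_has_type P (segs ! Suc j) (q, s2) (q, t2)" "sides_adjacent (nverts P q) s2 t2"
    and ty3: "seg_has_type P (segs ! Suc (Suc j)) (p, s3) (p, t3)" "sides_adjacent (nverts P p) s3 t3"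
  shows "s1 = s3 \<and> t1 = t3"
proof -
  obtain d where dir: "\<And>k. k < length segs \<Longrightarrow> seg_direction (segs ! k) d"
    using saddle_connection_direction[OF sc] by blast
  have pq: "p = seg_poly (segs ! j)" "q = seg_poly (segs ! Suc j)"
    using ty1(1) ty2(1) by (auto simp: seg_has_type_def)
  then have "p < length P" "q < length P" using saddle_connection_seg_poly[OF sc] j by auto
  then have p: "convex_ccw_polygon P p" "angles_obtuse_or_right P p"
    and q: "convex_ccw_polygon P q" "angles_obtuse_or_right P q" using p1 by (auto simp: P1_def)
  have dirs: "seg_direction (segs ! j) d" "seg_direction (segs ! Suc j) d"
    "seg_direction (segs ! Suc (Suc j)) d" using dir j by auto
  have "edge_vec P q s2 = - edge_vec P p t1" "edge_vec P p s3 = - edge_vec P q t2"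
    using saddle_connection_glued_types(2)[OF ts p1 sc _ ty1(1) ty2(1)]
      saddle_connection_glued_types(2)[OF ts p1 sc _ ty2(1) ty3(1)] j by auto
  moreover note adjacent_type_dotc[OF p ty1 dirs(1)] adjacent_type_dotc[OF q ty2 dirs(2)]
    adjacent_type_dotc[OF p ty3 dirs(3)]
  ultimately have "dotc (edge_vec P p s1) d > 0 \<longleftrightarrow> dotc (edge_vec P p s3) d > 0"
    by auto
  then show ?thesis using adjacent_types_eq[OF p ty1 dirs(1) ty3 dirs(3)] by blast
qed

lemma adjacent_seg_type:
  assumes "adjacent_seg P a"
  obtains s t where "seg_has_type P a (seg_poly a, s) (seg_poly a, t)"
    "sides_adjacent (nverts P (seg_poly a)) s t"
proof -
  obtain e e' where "seg_has_type P a e e'" "sides_adjacent (nverts P (seg_poly a)) (snd e) (snd e')"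
    using assms unfolding adjacent_seg_def by blast
  moreover have "e = (seg_poly a, snd e)" "e' = (seg_poly a, snd e')"
    using calculation(1) unfolding seg_has_type_def by (simp_all add: prod_eq_iff)
  ultimately show ?thesis using that by metis
qed

lemma maximal_adjacent_run_adjacent_seg:
  "maximal_adjacent_run P segs a r \<Longrightarrow> a \<le> j \<Longrightarrow> j < a + r \<Longrightarrow> adjacent_seg P (segs ! j)"
  unfolding maximal_adjacent_run_def by blast

lemma maximal_adjacent_run_length:
  "maximal_adjacent_run P segs a r \<Longrightarrow> a + r \<le> length segs"
  unfolding maximal_adjacent_run_def by blast

lemma run_same_type_if_same_poly:
  assumes ts: "translation_surface P sg" and p1: "P1 P" and sc: "saddle_connection P sg segs"
    and run: "maximal_adjacent_run P segs a r" and j: "a \<le> j" "Suc (Suc j) < a + r"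
    and same: "seg_poly (segs ! Suc (Suc j)) = seg_poly (segs ! j)"
  shows "same_type P (segs ! j) (segs ! Suc (Suc j))"
proof -
  have len: "Suc (Suc j) < length segs" using maximal_adjacent_run_length[OF run] j by simp
  have adj: "adjacent_seg P (segs ! j)" "adjacent_seg P (segs ! Suc j)" "adjacent_seg P (segs ! Suc (Suc j))"
    using maximal_adjacent_run_adjacent_seg[OF run] j by simp_all
  obtain s1 t1 where ty1: "seg_has_type P (segs ! j) (seg_poly (segs ! j), s1) (seg_poly (segs ! j), t1)"
      "sides_adjacent (nverts P (seg_poly (segs ! j))) s1 t1"
    by (rule adjacent_seg_type[OF adj(1)])
  obtain s2 t2 where ty2: "seg_has_type P (segs ! Suc j) (seg_poly (segs ! Suc j), s2) (seg_poly (segs ! Suc j), t2)"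
      "sides_adjacent (nverts P (seg_poly (segs ! Suc j))) s2 t2"
    by (rule adjacent_seg_type[OF adj(2)])
  obtain s3 t3 where ty3: "seg_has_type P (segs ! Suc (Suc j)) (seg_poly (segs ! j), s3) (seg_poly (segs ! j), t3)"
      "sides_adjacent (nverts P (seg_poly (segs ! j))) s3 t3"
    by (rule adjacent_seg_type[OF adj(3), unfolded same])
  have "s1 = s3 \<and> t1 = t3"
    using saddle_connection_adjacent_types_Suc_Suc[OF ts p1 sc len ty1 ty2 ty3] .
  then show ?thesis using ty1(1) ty3(1) by (auto simp: same_type_def)
qed

text \<open>Segments two apart of the same type leave through the same side, and they enter through
  the same side, which the gluing involution sends back to a single side.\<close>
lemma run_same_poly_shift:
  assumes ts: "translation_surface P sg" and p1: "P1 P" and sc: "saddle_connection P sg segs"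
    and run: "maximal_adjacent_run P segs a r" and j: "a \<le> j" "Suc (Suc (Suc j)) < a + r"
  shows "seg_poly (segs ! Suc (Suc j)) = seg_poly (segs ! j) \<longleftrightarrow>
         seg_poly (segs ! Suc (Suc (Suc j))) = seg_poly (segs ! Suc j)"
proof
  have len: "Suc (Suc (Suc j)) < length segs" using maximal_adjacent_run_length[OF run] j by simp
  {
    assume "seg_poly (segs ! Suc (Suc j)) = seg_poly (segs ! j)"
    then obtain e e' where e: "seg_has_type P (segs ! j) e e'" "seg_has_type P (segs ! Suc (Suc j)) e e'"
      using run_same_type_if_same_poly[OF ts p1 sc run] j unfolding same_type_def by fastforce
    have "fst (sg e') = seg_poly (segs ! Suc j)" "fst (sg e') = seg_poly (segs ! Suc (Suc (Suc j)))"
      using saddle_connection_exit(2)[OF ts p1 sc _ e(1)] saddle_connection_exit(2)[OF ts p1 sc _ e(2)]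
        len by auto
    then show "seg_poly (segs ! Suc (Suc (Suc j))) = seg_poly (segs ! Suc j)" by simp
  next
    assume "seg_poly (segs ! Suc (Suc (Suc j))) = seg_poly (segs ! Suc j)"
    then obtain f f' where f: "seg_has_type P (segs ! Suc j) f f'" "seg_has_type P (segs ! Suc (Suc (Suc j))) f f'"
      using run_same_type_if_same_poly[OF ts p1 sc run, of "Suc j"] j unfolding same_type_def by fastforce
    obtain e e' where e: "seg_has_type P (segs ! j) e e'"
      using maximal_adjacent_run_adjacent_seg[OF run, of j] j unfolding adjacent_seg_def by auto
    obtain g g' where g: "seg_has_type P (segs ! Suc (Suc j)) g g'"
      using maximal_adjacent_run_adjacent_seg[OF run, of "Suc (Suc j)"] j unfolding adjacent_seg_def by auto
    have "sg e' = f" "sg g' = f"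
      using saddle_connection_glued_types(1)[OF ts p1 sc _ e f(1)]
        saddle_connection_glued_types(1)[OF ts p1 sc _ g f(2)] len by auto
    moreover have "is_side P e'" "is_side P g'"
      using saddle_connection_exit(1)[OF ts p1 sc _ e] saddle_connection_exit(1)[OF ts p1 sc _ g] len by auto
    ultimately have "e' = g'" using ts unfolding translation_surface_def by metis
    then show "seg_poly (segs ! Suc (Suc j)) = seg_poly (segs ! j)"
      using e g by (simp add: seg_has_type_def)
  }
qed

lemma nat_interval_propagate:
  fixes Q :: "nat \<Rightarrow> bool"
  assumes "a \<le> i" "i \<le> b" "Q i" and step: "\<And>j. a \<le> j \<Longrightarrow> j < b \<Longrightarrow> Q j \<longleftrightarrow> Q (Suc j)"
    and "a \<le> j" "j \<le> b"
  shows "Q j"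
proof (cases "i \<le> j")
  case True
  then show ?thesis
    by (induction j rule: dec_induct) (use assms in auto)
next
  case False
  then have "j \<le> i" by simp
  then show ?thesis
    by (induction j rule: inc_induct) (use assms in auto)
qed

theorem mainTheorem10:
  fixes P :: "complex list list" and sg :: "nat \<times> nat \<Rightarrow> nat \<times> nat"
    and segs :: "seg list" and a r :: nat
  assumes "translation_surface P sg"
    and "P1 P" and "P2 P sg"
    and "saddle_connection P sg segs"
    and "\<not> sc_is_side P segs" and "\<not> sc_is_diagonal P segs"
    and "maximal_adjacent_run P segs a r"
    and "\<not> in_short_cylinder P segs a r"
  shows "\<forall>i. a \<le> i \<and> i + 2 < a + r \<longrightarrow>
           seg_poly (segs ! i) \<noteq> seg_poly (segs ! (i + 1)) \<and>
           seg_poly (segs ! (i + 1)) \<noteq> seg_poly (segs ! (i + 2)) \<and>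
           seg_poly (segs ! i) \<noteq> seg_poly (segs ! (i + 2))"
proof (intro allI impI)
  note ts = assms(1) and p1 = assms(2) and sc = assms(4) and run = assms(7)
  fix i assume i: "a \<le> i \<and> i + 2 < a + r"
  let ?two_apart = "\<lambda>j. seg_poly (segs ! Suc (Suc j)) = seg_poly (segs ! j)"
  have "i + 2 < length segs" using i maximal_adjacent_run_length[OF run] by simp
  then have "seg_poly (segs ! i) \<noteq> seg_poly (segs ! Suc i)"
    "seg_poly (segs ! Suc i) \<noteq> seg_poly (segs ! Suc (Suc i))"
    using saddle_connection_poly_Suc_neq[OF assms(3) sc] by simp_all
  moreover have "\<not> ?two_apart i"
  proof
    assume two_apart_i: "?two_apart i"
    have "?two_apart j" if "a \<le> j" "j \<le> a + r - 3" for j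
    proof (rule nat_interval_propagate[where Q = ?two_apart])
      show "a \<le> i" "i \<le> a + r - 3" "?two_apart i" using i two_apart_i by auto
      show "a \<le> j" "j \<le> a + r - 3" by (fact that)+
      fix k assume "a \<le> k" "k < a + r - 3"
      then show "?two_apart k \<longleftrightarrow> ?two_apart (Suc k)"
        using run_same_poly_shift[OF ts p1 sc run, of k] by simp
    qed
    then have "in_short_cylinder P segs a r"
      using i run_same_type_if_same_poly[OF ts p1 sc run]
      unfolding in_short_cylinder_def by (auto simp: numeral_2_eq_2)
    with assms(8) show False by contradiction
  qed
  ultimately show "seg_poly (segs ! i) \<noteq> seg_poly (segs ! (i + 1)) \<and>
      seg_poly (segs ! (i + 1)) \<noteq> seg_poly (segs ! (i + 2)) \<and>
      seg_poly (segs ! i) \<noteq> seg_poly (segs ! (i + 2))"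
    by (auto simp: numeral_2_eq_2)
qed

end
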